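(* Let $(v,u,\theta)$ be a (sufficiently regular) solution on $\Omega_T:=\{(t,y):0\le t\le T,\ y>Y(t)\}$ of the Lagrangian free boundary problem $$v_t-u_y=0,\qquad u_t+P_y=\Big(\frac{\mu u_y}{v}\Big)_y,\qquad \Big(c_v\theta+\frac{u^2}{2}\Big)_t+(Pu)_y=\Big(\frac{\kappa\theta_y}{v}+\frac{\mu uu_y}{v}\Big)_y,$$ $P=R\theta/v$, with $(u,\theta)(t,Y(t))=(u_-,\theta_-)$ and $(v,u,\theta)(0,y)=(v_0,u_0,\theta_0)(y)$, where $Y$ is nondecreasing with $Y(0)=0$, and with sufficient decay at $y=\infty$ for the integrals below to make sense. Let $(\tau,z)\in\Omega_T$. Then for all $t\in[0,\tau]$ and all $y\in I_z(\tau):=(Y(\tau),\infty)\cap([z]-1,[z]+4)$, $$v(t,y)=B_z(t,y)A_z(t)+\frac{R}{\mu}\int_0^t\frac{B_z(t,y)A_z(t)}{B_z(s,y)A_z(s)}\,\theta(s,y)\,ds,$$ where $$B_z(t,y):=v_0(y)\exp\Big\{\frac1\mu\int_y^\infty(u_0(\xi)-u(t,\xi))\varphi_z(\xi)\,d\xi\Big\},\qquad A_z(t):=\exp\Big\{\frac1\mu\int_0^t\!\!\int_{[z]+4}^{[z]+5}\Big(\frac{\mu u_y}{v}-P\Big)d\xi\,ds\Big\}.$$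
   Context: $\mu,\kappa,R>0$, $c_v>0$ constants. $[\cdot]$ denotes the integer part. The cutoff $\varphi_z\in W^{1,\infty}(\mathbb{R})$ with parameter $z\in\mathbb{R}$ is $\varphi_z(y)=1$ for $y<[z]+4$, $\varphi_z(y)=[z]+5-y$ for $[z]+4\le y<[z]+5$, $\varphi_z(y)=0$ for $y\ge[z]+5$. In the paper, $Y(t)=-u_-\int_0^t\rho(s,0)ds$ with $u_-<0$ and $v=1/\rho$ is the specific volume. *)

theory Defs
  imports "HOL-Analysis.Analysis"
begin

definition phi :: "real \<Rightarrow> real \<Rightarrow> real" where
  "phi z y = (if y < real_of_int \<lfloor>z\<rfloor> + 4 then 1
              else if y < real_of_int \<lfloor>z\<rfloor> + 5 then real_of_int \<lfloor>z\<rfloor> + 5 - y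
              else 0)"

definition OmegaT :: "real \<Rightarrow> (real \<Rightarrow> real) \<Rightarrow> (real \<times> real) set" where
  "OmegaT T Y = {(t, y). 0 \<le> t \<and> t \<le> T \<and> Y t < y}"

definition stress ::
  "real \<Rightarrow> real \<Rightarrow> (real \<Rightarrow> real \<Rightarrow> real) \<Rightarrow> (real \<Rightarrow> real \<Rightarrow> real) \<Rightarrow> (real \<Rightarrow> real \<Rightarrow> real)
   \<Rightarrow> real \<Rightarrow> real \<Rightarrow> real" where
  "stress mu R v u theta t y = mu * deriv (u t) y / v t y - R * theta t y / v t y"

definition Bz ::
  "real \<Rightarrow> (real \<Rightarrow> real) \<Rightarrow> (real \<Rightarrow> real) \<Rightarrow> (real \<Rightarrow> real \<Rightarrow> real) \<Rightarrow> real \<Rightarrow> real \<Rightarrow> real \<Rightarrow> real" where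
  "Bz mu v0 u0 u z t y =
     v0 y * exp ((1 / mu) * integral {y..} (\<lambda>\<xi>. (u0 \<xi> - u t \<xi>) * phi z \<xi>))"

definition Az ::
  "real \<Rightarrow> real \<Rightarrow> (real \<Rightarrow> real \<Rightarrow> real) \<Rightarrow> (real \<Rightarrow> real \<Rightarrow> real) \<Rightarrow> (real \<Rightarrow> real \<Rightarrow> real)
   \<Rightarrow> real \<Rightarrow> real \<Rightarrow> real" where
  "Az mu R v u theta z t =
     exp ((1 / mu) * integral {0..t} (\<lambda>s.
        integral {real_of_int \<lfloor>z\<rfloor> + 4 .. real_of_int \<lfloor>z\<rfloor> + 5} (\<lambda>\<xi>. stress mu R v u theta s \<xi>)))"

end

theory Submission
  imports Defs
begin

text \<open>
  With the stress \<open>\<sigma> = \<mu> u\<^sub>y / v - P\<close>, the mass equation reads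
  \<open>v\<^sub>t = u\<^sub>y = (\<sigma>/\<mu>) v + R\<theta>/\<mu>\<close>: along a fixed \<open>y\<close> it is a scalar
  linear ODE for \<open>v\<close>, solved by variation of constants once an integrating factor with
  logarithmic derivative \<open>\<sigma>(t,y)/\<mu>\<close> is known. Integrating the momentum equation
  \<open>u\<^sub>t = \<sigma>\<^sub>y\<close> against the cutoff \<open>\<phi>\<^sub>z\<close> over \<open>(y,\<infinity>)\<close> and integrating by parts
  (\<open>\<phi>\<^sub>z' = -1\<close> on the ramp) gives
  \<open>\<partial>\<^sub>t \<integral>\<^sub>y\<^sup>\<infinity> (u\<^sub>0 - u) \<phi>\<^sub>z = \<sigma>(t,y) - \<integral>\<^bsub>[z]+4\<^esub>\<^bsup>[z]+5\<^esup> \<sigma>\<close>; the last term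
  is cancelled by the time derivative of \<open>\<mu> log A\<^sub>z\<close>. Hence \<open>B\<^sub>z A\<^sub>z\<close> is the integrating
  factor, and it equals \<open>v\<^sub>0(y)\<close> at \<open>t = 0\<close>.
\<close>

lemma phi_eq_max_min: "phi z x = max 0 (min 1 (real_of_int \<lfloor>z\<rfloor> + 5 - x))"
  unfolding phi_def by auto

lemma continuous_on_phi: "continuous_on A (phi z)"
  unfolding phi_eq_max_min by (intro continuous_intros)

lemma integral_atLeast_eq_atLeastAtMost:
  fixes g :: "real \<Rightarrow> real"
  assumes "y \<le> b" "\<And>\<xi>. \<xi> > b \<Longrightarrow> g \<xi> = 0" "g integrable_on {y..b}"
  shows "integral {y..} g = integral {y..b} g"
proof -
  have "((\<lambda>\<xi>. if \<xi> \<in> {y..b} then g \<xi> else 0) has_integral integral {y..b} g) {y..b}"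
    using assms(3) by (rule has_integral_cong[THEN iffD1, rotated, OF integrable_integral]) simp
  then have "((\<lambda>\<xi>. if \<xi> \<in> {y..b} then g \<xi> else 0) has_integral integral {y..b} g) {y..}"
    by (rule has_integral_on_superset) auto
  then have "(g has_integral integral {y..b} g) {y..}"
    by (rule has_integral_cong[THEN iffD1, rotated]) (use assms(2) in auto)
  then show ?thesis by (rule integral_unique)
qed

lemma has_integral_deriv_mult_phi:
  fixes S :: "real \<Rightarrow> real" and z :: real
  defines "a \<equiv> real_of_int \<lfloor>z\<rfloor> + 4"
  assumes "y \<le> a" and dS: "\<And>\<xi>. \<xi> \<in> {y..a + 1} \<Longrightarrow> S differentiable at \<xi>"
  shows "((\<lambda>\<xi>. deriv S \<xi> * phi z \<xi>) has_integral (integral {a..a + 1} S - S y)) {y..a + 1}"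
proof -
  have D: "\<And>\<xi>. \<xi> \<in> {y..a + 1} \<Longrightarrow> (S has_real_derivative deriv S \<xi>) (at \<xi>)"
    using dS DERIV_deriv_iff_real_differentiable by blast
  have "(deriv S has_integral (S a - S y)) {y..a}"
    using assms(2) D
    by (intro fundamental_theorem_of_calculus)
       (auto simp: has_real_derivative_iff_has_vector_derivative[symmetric]
             intro: has_field_derivative_at_within)
  then have left: "((\<lambda>\<xi>. deriv S \<xi> * phi z \<xi>) has_integral (S a - S y)) {y..a}"
    by (rule has_integral_cong[THEN iffD1, rotated]) (auto simp: phi_def a_def)
  \<comment> \<open>on the ramp, \<open>S' \<phi> = ((a + 1 - \<xi>) S)' + S\<close>\<close>
  have phi_ramp: "phi z \<xi> = a + 1 - \<xi>" if "\<xi> \<in> {a..a + 1}" for \<xi>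
    using that unfolding phi_def a_def by auto
  have ramp: "((\<lambda>\<xi>. - S \<xi> + (a + 1 - \<xi>) * deriv S \<xi>) has_integral
           ((a + 1 - (a + 1)) * S (a + 1) - (a + 1 - a) * S a)) {a..a + 1}"
  proof (rule fundamental_theorem_of_calculus)
    fix x assume "x \<in> {a..a + 1}"
    then have "(S has_real_derivative deriv S x) (at x)" using D assms(2) by auto
    then have "((\<lambda>\<xi>. (a + 1 - \<xi>) * S \<xi>) has_real_derivative (- S x + (a + 1 - x) * deriv S x)) (at x)"
      by (auto intro!: derivative_eq_intros)
    then show "((\<lambda>\<xi>. (a + 1 - \<xi>) * S \<xi>) has_vector_derivative (- S x + (a + 1 - x) * deriv S x))
        (at x within {a..a + 1})"
      by (simp add: has_real_derivative_iff_has_vector_derivative[symmetric] has_field_derivative_at_within)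
  qed simp_all
  have "continuous_on {a..a + 1} S"
    using assms(2) by (intro continuous_at_imp_continuous_on ballI DERIV_isCont[OF D]) auto
  then have "(S has_integral integral {a..a + 1} S) {a..a + 1}"
    using integrable_continuous_real by blast
  from has_integral_add[OF ramp this]
  have "((\<lambda>\<xi>. deriv S \<xi> * phi z \<xi>) has_integral
          ((a + 1 - (a + 1)) * S (a + 1) - (a + 1 - a) * S a + integral {a..a + 1} S)) {a..a + 1}"
    by (rule has_integral_cong[THEN iffD1, rotated]) (simp add: phi_ramp)
  then have "((\<lambda>\<xi>. deriv S \<xi> * phi z \<xi>) has_integral (integral {a..a + 1} S - S a)) {a..a + 1}"
    by simp
  with left have "((\<lambda>\<xi>. deriv S \<xi> * phi z \<xi>) has_integral (S a - S y + (integral {a..a + 1} S - S a))) {y..a + 1}"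
    using assms(2) by (intro has_integral_combine) auto
  then show ?thesis by simp
qed

lemma has_real_derivative_weighted_integral:
  fixes f f' :: "real \<Rightarrow> real \<Rightarrow> real" and g :: "real \<Rightarrow> real"
  assumes f: "\<And>s \<xi>. s \<in> U \<Longrightarrow> \<xi> \<in> {c..d} \<Longrightarrow> ((\<lambda>s. f s \<xi>) has_real_derivative f' s \<xi>) (at s within U)"
    and cont_f: "\<And>s. s \<in> U \<Longrightarrow> continuous_on {c..d} (f s)"
    and cont_f': "continuous_on (U \<times> {c..d}) (\<lambda>(s, \<xi>). f' s \<xi>)"
    and cont_g: "continuous_on {c..d} g"
    and "convex U" "s \<in> U"
  shows "((\<lambda>s. integral {c..d} (\<lambda>\<xi>. f s \<xi> * g \<xi>)) has_real_derivative
           integral {c..d} (\<lambda>\<xi>. f' s \<xi> * g \<xi>)) (at s within U)"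
  unfolding cbox_interval[symmetric]
proof (rule leibniz_rule_field_derivative)
  show "((\<lambda>s. f s \<xi> * g \<xi>) has_field_derivative f' s \<xi> * g \<xi>) (at s within U)"
    if "s \<in> U" "\<xi> \<in> cbox c d" for s \<xi>
    using f that by (auto intro!: derivative_eq_intros)
  show "(\<lambda>\<xi>. f s \<xi> * g \<xi>) integrable_on cbox c d" if "s \<in> U" for s
    using cont_f[OF that] cont_g
    by (auto simp: cbox_interval intro!: integrable_continuous_real continuous_intros)
  have "continuous_on (U \<times> {c..d}) (\<lambda>p. g (snd p))"
    by (rule continuous_on_compose2[OF cont_g continuous_on_snd]) auto
  with cont_f' show "continuous_on (U \<times> cbox c d) (\<lambda>(s, \<xi>). f' s \<xi> * g \<xi>)"
    by (auto simp: cbox_interval split_def intro!: continuous_intros)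
qed (use assms in auto)

lemma linear_ode_variation_of_constants:
  fixes v p c f :: "real \<Rightarrow> real"
  assumes t: "t \<in> {a..b}"
    and p: "\<And>s. s \<in> {a..b} \<Longrightarrow> (p has_real_derivative c s * p s) (at s within {a..b})"
    and v: "\<And>s. s \<in> {a..b} \<Longrightarrow> (v has_real_derivative c s * v s + f s) (at s within {a..b})"
    and p_nonzero: "\<And>s. s \<in> {a..b} \<Longrightarrow> p s \<noteq> 0"
  shows "v t = p t / p a * v a + integral {a..t} (\<lambda>s. p t / p s * f s)"
proof -
  have "((\<lambda>s. v s / p s) has_real_derivative f s / p s) (at s within {a..b})" if s: "s \<in> {a..b}" for s
  proof -
    have "((\<lambda>s. v s / p s) has_real_derivative
            ((c s * v s + f s) * p s - v s * (c s * p s)) / (p s * p s)) (at s within {a..b})"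
      using p_nonzero[OF s] by (intro DERIV_divide v p s)
    moreover have "((c s * v s + f s) * p s - v s * (c s * p s)) / (p s * p s) = f s / p s"
      using p_nonzero[OF s] by (simp add: field_simps)
    ultimately show ?thesis by simp
  qed
  note quotient = this
  have "((\<lambda>s. f s / p s) has_integral (v t / p t - v a / p a)) {a..t}"
  proof (rule fundamental_theorem_of_calculus)
    fix x assume "x \<in> {a..t}"
    then have "((\<lambda>s. v s / p s) has_real_derivative f x / p x) (at x within {a..t})"
      using t by (intro has_field_derivative_subset[OF quotient]) auto
    then show "((\<lambda>s. v s / p s) has_vector_derivative f x / p x) (at x within {a..t})"
      by (simp add: has_real_derivative_iff_has_vector_derivative)
  qed (use t in simp)
  then have "((\<lambda>s. p t * (f s / p s)) has_integral p t * (v t / p t - v a / p a)) {a..t}"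
    by (rule has_integral_mult_right)
  then have "integral {a..t} (\<lambda>s. p t / p s * f s) = v t - p t / p a * v a"
    using p_nonzero t by (simp add: integral_unique field_simps)
  then show ?thesis by simp
qed

lemma continuous_on_slice:
  fixes f :: "real \<Rightarrow> real \<Rightarrow> real"
  assumes "continuous_on (A \<times> B) (\<lambda>(s, \<xi>). f s \<xi>)" "s \<in> A"
  shows "continuous_on B (f s)"
proof -
  have "continuous_on B (\<lambda>\<xi>. (\<lambda>(s, \<xi>). f s \<xi>) (s, \<xi>))"
    by (rule continuous_on_compose2[OF assms(1)]) (use assms(2) in \<open>auto intro!: continuous_intros\<close>)
  then show ?thesis by simp
qed

lemma integral_phi_momentum_has_derivative:
  fixes u \<sigma> :: "real \<Rightarrow> real \<Rightarrow> real" and u0 :: "real \<Rightarrow> real" and z :: real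
  defines "a \<equiv> real_of_int \<lfloor>z\<rfloor> + 4"
  assumes y_le: "y \<le> a"
    and cont_u: "continuous_on ({0..tau} \<times> {y..}) (\<lambda>(s, \<xi>). u s \<xi>)"
    and diff_\<sigma>: "\<And>s \<xi>. s \<in> {0..tau} \<Longrightarrow> y \<le> \<xi> \<Longrightarrow> \<sigma> s differentiable at \<xi>"
    and cont_\<sigma>': "continuous_on ({0..tau} \<times> {y..}) (\<lambda>(s, \<xi>). deriv (\<sigma> s) \<xi>)"
    and momentum: "\<And>s \<xi>. s \<in> {0..tau} \<Longrightarrow> y \<le> \<xi> \<Longrightarrow>
          ((\<lambda>s. u s \<xi>) has_real_derivative deriv (\<sigma> s) \<xi>) (at s within {0..tau})"
    and initial: "\<And>\<xi>. y \<le> \<xi> \<Longrightarrow> u 0 \<xi> = u0 \<xi>"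
    and s: "s \<in> {0..tau}"
  shows "((\<lambda>s. integral {y..} (\<lambda>\<xi>. (u0 \<xi> - u s \<xi>) * phi z \<xi>)) has_real_derivative
           \<sigma> s y - integral {a..a + 1} (\<sigma> s)) (at s within {0..tau})"
proof -
  have sub: "{0..tau} \<times> {y..a + 1} \<subseteq> {0..tau} \<times> {y..}" by auto
  have cont_slice: "continuous_on {y..a + 1} (u s)" if "s \<in> {0..tau}" for s
    using continuous_on_slice[OF continuous_on_subset[OF cont_u sub] that] .
  have "continuous_on {y..a + 1} (u 0)"
    using s by (intro cont_slice) simp
  then have cont_u0: "continuous_on {y..a + 1} u0"
    by (rule continuous_on_cong[THEN iffD1, rotated 2]) (auto simp: initial)
  have truncate: "integral {y..} (\<lambda>\<xi>. (u0 \<xi> - u s \<xi>) * phi z \<xi>)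
      = integral {y..a + 1} (\<lambda>\<xi>. (u0 \<xi> - u s \<xi>) * phi z \<xi>)" if "s \<in> {0..tau}" for s
    using y_le cont_u0 cont_slice[OF that]
    by (intro integral_atLeast_eq_atLeastAtMost integrable_continuous_real continuous_intros
        continuous_on_phi) (auto simp: phi_def a_def)
  have "((\<lambda>s. integral {y..a + 1} (\<lambda>\<xi>. (u0 \<xi> - u s \<xi>) * phi z \<xi>)) has_real_derivative
          integral {y..a + 1} (\<lambda>\<xi>. - deriv (\<sigma> s) \<xi> * phi z \<xi>)) (at s within {0..tau})"
    using s cont_u0 continuous_on_subset[OF cont_\<sigma>' sub]
    by (intro has_real_derivative_weighted_integral continuous_on_phi)
      (auto intro!: derivative_eq_intros momentum continuous_intros cont_slice simp: split_def)
  moreover have "((\<lambda>\<xi>. deriv (\<sigma> s) \<xi> * phi z \<xi>) has_integral (integral {a..a + 1} (\<sigma> s) - \<sigma> s y)) {y..a + 1}"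
    unfolding a_def using y_le diff_\<sigma> s by (intro has_integral_deriv_mult_phi) (auto simp: a_def)
  then have "integral {y..a + 1} (\<lambda>\<xi>. - deriv (\<sigma> s) \<xi> * phi z \<xi>) = \<sigma> s y - integral {a..a + 1} (\<sigma> s)"
    by (simp add: integral_unique)
  ultimately show ?thesis
    using s truncate by (auto intro: has_field_derivative_transform_within[where d=1])
qed

lemma Bz_Az_has_derivative:
  fixes v u theta :: "real \<Rightarrow> real \<Rightarrow> real" and u0 v0 :: "real \<Rightarrow> real" and mu R :: real
  defines "\<sigma> \<equiv> stress mu R v u theta"
  assumes "mu \<noteq> 0" and y_le: "y \<le> real_of_int \<lfloor>z\<rfloor> + 4"
    and cont_u: "continuous_on ({0..tau} \<times> {y..}) (\<lambda>(s, \<xi>). u s \<xi>)"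
    and cont_\<sigma>: "continuous_on ({0..tau} \<times> {y..}) (\<lambda>(s, \<xi>). \<sigma> s \<xi>)"
    and diff_\<sigma>: "\<And>s \<xi>. s \<in> {0..tau} \<Longrightarrow> y \<le> \<xi> \<Longrightarrow> \<sigma> s differentiable at \<xi>"
    and cont_\<sigma>': "continuous_on ({0..tau} \<times> {y..}) (\<lambda>(s, \<xi>). deriv (\<sigma> s) \<xi>)"
    and momentum: "\<And>s \<xi>. s \<in> {0..tau} \<Longrightarrow> y \<le> \<xi> \<Longrightarrow>
          ((\<lambda>s. u s \<xi>) has_real_derivative deriv (\<sigma> s) \<xi>) (at s within {0..tau})"
    and initial: "\<And>\<xi>. y \<le> \<xi> \<Longrightarrow> u 0 \<xi> = u0 \<xi>"
    and s: "s \<in> {0..tau}"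
  shows "((\<lambda>s. Bz mu v0 u0 u z s y * Az mu R v u theta z s) has_real_derivative
           \<sigma> s y / mu * (Bz mu v0 u0 u z s y * Az mu R v u theta z s)) (at s within {0..tau})"
proof -
  define a where "a = real_of_int \<lfloor>z\<rfloor> + 4"
  define F where "F s = integral {y..} (\<lambda>\<xi>. (u0 \<xi> - u s \<xi>) * phi z \<xi>)" for s
  define G where "G s = integral {a..a + 1} (\<sigma> s)" for s
  have Bz_Az: "Bz mu v0 u0 u z s y * Az mu R v u theta z s
      = v0 y * exp (F s / mu) * exp (integral {0..s} G / mu)" for s
    by (simp add: Bz_def Az_def F_def G_def[abs_def] a_def \<sigma>_def add.assoc)
  have F': "(F has_real_derivative \<sigma> s y - G s) (at s within {0..tau})"
    unfolding F_def G_def a_def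
    by (rule integral_phi_momentum_has_derivative[OF y_le cont_u diff_\<sigma> cont_\<sigma>' momentum initial s])
  have "{0..tau} \<times> {a..a + 1} \<subseteq> {0..tau} \<times> {y..}"
    using y_le by (auto simp: a_def)
  then have "continuous_on {0..tau} G"
    unfolding G_def cbox_interval[symmetric] using continuous_on_subset[OF cont_\<sigma>]
    by (intro integral_continuous_on_param) (simp add: cbox_interval)
  then have "((\<lambda>s. integral {0..s} G) has_real_derivative G s) (at s within {0..tau})"
    using s by (rule integral_has_real_derivative)
  with F' show ?thesis
    unfolding Bz_Az using \<open>mu \<noteq> 0\<close> by (auto intro!: derivative_eq_intros simp: field_simps)
qed

lemma continuous_on_stress:
  fixes v u theta :: "real \<Rightarrow> real \<Rightarrow> real"
  assumes "continuous_on K (\<lambda>(t, y). v t y)" "continuous_on K (\<lambda>(t, y). deriv (u t) y)"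
    and "continuous_on K (\<lambda>(t, y). theta t y)" "\<And>t y. (t, y) \<in> K \<Longrightarrow> v t y \<noteq> 0"
  shows "continuous_on K (\<lambda>(t, y). stress mu R v u theta t y)"
proof -
  have "(\<lambda>(t, y). stress mu R v u theta t y) = (\<lambda>p. mu * (\<lambda>(t, y). deriv (u t) y) p / (\<lambda>(t, y). v t y) p
          - R * (\<lambda>(t, y). theta t y) p / (\<lambda>(t, y). v t y) p)"
    by (simp add: stress_def fun_eq_iff split_def)
  with assms show ?thesis
    by (auto intro!: continuous_intros)
qed

lemma deriv_eq_stress:
  assumes "v t y \<noteq> 0" "mu \<noteq> 0"
  shows "deriv (u t) y = stress mu R v u theta t y / mu * v t y + R / mu * theta t y"
  using assms by (simp add: stress_def field_simps)

lemma Bz_Az_initial: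
  assumes "\<And>\<xi>. y \<le> \<xi> \<Longrightarrow> u 0 \<xi> = u0 \<xi>"
  shows "Bz mu v0 u0 u z 0 y * Az mu R v u theta z 0 = v0 y"
proof -
  have "integral {y..} (\<lambda>\<xi>. (u0 \<xi> - u 0 \<xi>) * phi z \<xi>) = integral {y..} (\<lambda>\<xi>. 0)"
    using assms by (intro integral_cong) auto
  then show ?thesis by (simp add: Bz_def Az_def)
qed

lemma strip_subset_OmegaT:
  assumes "mono_on {0..T} Y" "0 \<le> tau" "tau \<le> T" "Y tau < y"
  shows "{0..tau} \<times> {y..} \<subseteq> OmegaT T Y"
proof -
  have "Y s < \<xi>" if "s \<in> {0..tau}" "y \<le> \<xi>" for s \<xi>
    using assms that mono_onD[OF assms(1), of s tau] by fastforce
  then show ?thesis using assms(3) by (auto simp: OmegaT_def)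
qed

theorem lemma2p5:
  fixes mu kappa R cv T u_m theta_m :: real
    and v u theta :: "real \<Rightarrow> real \<Rightarrow> real"
    and v0 u0 theta0 Y :: "real \<Rightarrow> real"
    and tau z :: real
  assumes params: "mu > 0" "kappa > 0" "R > 0" "cv > 0"
    and Y_mono: "mono_on {0..T} Y" and Y0: "Y 0 = 0"
    \<comment> \<open>regularity of the solution on Omega_T\<close>
    and v_pos: "\<And>t y. (t, y) \<in> OmegaT T Y \<Longrightarrow> v t y > 0"
    and cont_v: "continuous_on (OmegaT T Y) (\<lambda>(t, y). v t y)"
    and cont_u: "continuous_on (OmegaT T Y) (\<lambda>(t, y). u t y)"
    and cont_theta: "continuous_on (OmegaT T Y) (\<lambda>(t, y). theta t y)"
    and diff_u: "\<And>t y. (t, y) \<in> OmegaT T Y \<Longrightarrow> u t differentiable at y"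
    and diff_theta: "\<And>t y. (t, y) \<in> OmegaT T Y \<Longrightarrow> theta t differentiable at y"
    and cont_uy: "continuous_on (OmegaT T Y) (\<lambda>(t, y). deriv (u t) y)"
    and cont_thetay: "continuous_on (OmegaT T Y) (\<lambda>(t, y). deriv (theta t) y)"
    and diff_stress: "\<And>t y. (t, y) \<in> OmegaT T Y \<Longrightarrow> stress mu R v u theta t differentiable at y"
    and cont_stressy: "continuous_on (OmegaT T Y) (\<lambda>(t, y). deriv (stress mu R v u theta t) y)"
    and diff_eflux: "\<And>t y. (t, y) \<in> OmegaT T Y \<Longrightarrow>
          (\<lambda>\<eta>. kappa * deriv (theta t) \<eta> / v t \<eta> + mu * u t \<eta> * deriv (u t) \<eta> / v t \<eta>
                - R * theta t \<eta> / v t \<eta> * u t \<eta>) differentiable at y"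
    \<comment> \<open>the equations: v_t = u_y, u_t = (mu u_y / v - P)_y, energy equation\<close>
    and eq_mass: "\<And>t y. (t, y) \<in> OmegaT T Y \<Longrightarrow>
          ((\<lambda>s. v s y) has_real_derivative deriv (u t) y) (at t within {0..T})"
    and eq_mom: "\<And>t y. (t, y) \<in> OmegaT T Y \<Longrightarrow>
          ((\<lambda>s. u s y) has_real_derivative deriv (stress mu R v u theta t) y) (at t within {0..T})"
    and eq_energy: "\<And>t y. (t, y) \<in> OmegaT T Y \<Longrightarrow>
          ((\<lambda>s. cv * theta s y + (u s y)^2 / 2) has_real_derivative
             deriv (\<lambda>\<eta>. kappa * deriv (theta t) \<eta> / v t \<eta> + mu * u t \<eta> * deriv (u t) \<eta> / v t \<eta>
                        - R * theta t \<eta> / v t \<eta> * u t \<eta>) y) (at t within {0..T})"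
    \<comment> \<open>boundary and initial conditions\<close>
    and bc_u: "\<And>t. t \<in> {0..T} \<Longrightarrow> u t (Y t) = u_m"
    and bc_theta: "\<And>t. t \<in> {0..T} \<Longrightarrow> theta t (Y t) = theta_m"
    and ic: "\<And>y. y > Y 0 \<Longrightarrow> v 0 y = v0 y \<and> u 0 y = u0 y \<and> theta 0 y = theta0 y"
    and tz: "(tau, z) \<in> OmegaT T Y"
  shows "\<forall>t \<in> {0..tau}. \<forall>y \<in> {Y tau<..} \<inter> {real_of_int \<lfloor>z\<rfloor> - 1 <..< real_of_int \<lfloor>z\<rfloor> + 4}.
           v t y = Bz mu v0 u0 u z t y * Az mu R v u theta z t
             + (R / mu) * integral {0..t} (\<lambda>s.
                 (Bz mu v0 u0 u z t y * Az mu R v u theta z t)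
                 / (Bz mu v0 u0 u z s y * Az mu R v u theta z s) * theta s y)"
proof (intro ballI)
  fix t y
  assume t: "t \<in> {0..tau}"
    and y: "y \<in> {Y tau<..} \<inter> {real_of_int \<lfloor>z\<rfloor> - 1 <..< real_of_int \<lfloor>z\<rfloor> + 4}"
  define \<sigma> where "\<sigma> = stress mu R v u theta"
  define P where "P s = Bz mu v0 u0 u z s y * Az mu R v u theta z s" for s
  have tau: "0 \<le> tau" "tau \<le> T" using tz by (auto simp: OmegaT_def)
  have strip: "{0..tau} \<times> {y..} \<subseteq> OmegaT T Y"
    using Y_mono tau y by (intro strip_subset_OmegaT) auto
  have initial: "v 0 \<xi> = v0 \<xi> \<and> u 0 \<xi> = u0 \<xi>" if "y \<le> \<xi>" for \<xi>
  proof -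
    have "(0, \<xi>) \<in> OmegaT T Y" using strip tau that by auto
    then show ?thesis using ic Y0 by (auto simp: OmegaT_def)
  qed
  have v_pos_strip: "v s y > 0" if "s \<in> {0..tau}" for s
    using that by (intro v_pos subsetD[OF strip]) auto
  have P_deriv: "(P has_real_derivative \<sigma> s y / mu * P s) (at s within {0..tau})"
    if "s \<in> {0..tau}" for s
    unfolding P_def \<sigma>_def using params(1) y that initial strip tau
    by (intro Bz_Az_has_derivative continuous_on_subset[OF cont_u] continuous_on_subset[OF cont_stressy]
        continuous_on_subset[OF continuous_on_stress[OF cont_v cont_uy cont_theta]]
        diff_stress has_field_derivative_subset[OF eq_mom])
       (auto dest: v_pos)
  have v_deriv: "((\<lambda>s. v s y) has_real_derivative \<sigma> s y / mu * v s y + R / mu * theta s y)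
      (at s within {0..tau})" if "s \<in> {0..tau}" for s
  proof -
    have "((\<lambda>s. v s y) has_real_derivative deriv (u s) y) (at s within {0..tau})"
      using that tau by (intro has_field_derivative_subset[OF eq_mass] subsetD[OF strip]) auto
    moreover have "deriv (u s) y = \<sigma> s y / mu * v s y + R / mu * theta s y"
      unfolding \<sigma>_def using v_pos_strip[OF that] params(1) by (intro deriv_eq_stress) auto
    ultimately show ?thesis by (simp only:)
  qed
  have P0: "P 0 = v 0 y"
    unfolding P_def using initial by (subst Bz_Az_initial) auto
  have P_pos: "P s > 0" for s
    using initial v_pos_strip[of 0] tau by (auto simp: P_def Bz_def Az_def)
  have "v t y = P t / P 0 * v 0 y + integral {0..t} (\<lambda>s. P t / P s * (R / mu * theta s y))"
    by (rule linear_ode_variation_of_constants[OF t P_deriv v_deriv])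
      (use P_pos in \<open>auto simp: less_imp_neq[symmetric]\<close>)
  moreover have "integral {0..t} (\<lambda>s. P t / P s * (R / mu * theta s y))
      = R / mu * integral {0..t} (\<lambda>s. P t / P s * theta s y)"
    by (simp only: mult.left_commute[of "P t / P _" "R / mu"] integral_mult_right)
  ultimately show "v t y = P t + (R / mu) * integral {0..t} (\<lambda>s. P t / P s * theta s y)"
    using P_pos[of 0] by (simp add: P0)
qed

end
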